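(* Let $U$ be a random variable uniformly distributed on $S$ and let $p,q$ be two probabilities on the finite set $A$. Then $$\mathbb P[g(U,p)\ne g(U,q)]\le 2\|p-q\|.$$ If moreover $A$ has exactly two elements, then $\mathbb P[g(U,p)\ne g(U,q)]=\|p-q\|$.
   Context: $A$ finite with a fixed total order; $(E_a)_{a\in A}$ canonical basis of $\mathbb R^A$; $H=\{x\in\mathbb R^A:\sum_ax_a=1\}$; $S=(\mathbb R_+)^A\cap H$ with its uniform law (normalized Lebesgue measure on $H$). For a probability $p$ on $A$: $G(p)=\sum_ap(a)E_a$; $S_a(p)=\mathrm{Conv}(\{G(p)\}\cup\{E_b:b\ne a\})$; $g(s,p)=\min\{a\in A:s\in S_a(p)\}$. $\|p-q\|=\frac12\sum_a|p(a)-q(a)|$ is the total variation distance. *)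

theory Defs
  imports "HOL-Analysis.Analysis" "HOL-Probability.Probability"
begin

text \<open>The finite totally ordered set A is a type 'a of class {finite, linorder};
  R^A is real^'a; the canonical basis vector E_a is axis a 1.\<close>

definition simplexH :: "(real^'a::finite) set" where
  "simplexH = {x. (\<Sum>a\<in>UNIV. x $ a) = 1}"

definition simplexS :: "(real^'a::finite) set" where
  "simplexS = {x. (\<forall>a. 0 \<le> x $ a) \<and> (\<Sum>a\<in>UNIV. x $ a) = 1}"

definition Gp :: "'a::finite pmf \<Rightarrow> real^'a" where
  "Gp p = (\<chi> a. pmf p a)"

definition Sa :: "'a::finite \<Rightarrow> 'a pmf \<Rightarrow> (real^'a) set" where
  "Sa a p = convex hull (insert (Gp p) {axis b 1 | b. b \<noteq> a})"

definition gfun :: "real^'a::{finite,linorder} \<Rightarrow> 'a pmf \<Rightarrow> 'a" where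
  "gfun s p = (LEAST a. s \<in> Sa a p)"

definition tvdist :: "'a::finite pmf \<Rightarrow> 'a pmf \<Rightarrow> real" where
  "tvdist p q = (1/2) * (\<Sum>a\<in>UNIV. \<bar>pmf p a - pmf q a\<bar>)"

text \<open>Lebesgue measure on the hyperplane H, via the affine chart that drops the
  coordinate a0 = the least element of A (any choice gives the same normalized law).\<close>

definition a0 :: "'a::{finite,linorder}" where
  "a0 = (LEAST b. True)"

definition chartH :: "('a \<Rightarrow> real) \<Rightarrow> real^'a::{finite,linorder}" where
  "chartH y = (\<chi> a. if a = a0 then 1 - (\<Sum>b\<in>UNIV - {a0}. y b) else y a)"

definition lebesgueH :: "(real^'a::{finite,linorder}) measure" where
  "lebesgueH = distr (PiM (UNIV - {a0}) (\<lambda>_. lborel)) borel chartH"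

definition uniformS :: "(real^'a::{finite,linorder}) measure" where
  "uniformS = uniform_measure lebesgueH simplexS"

end

theory Submission
  imports Defs
begin

text \<open>
  The key observation is that S_a(p) is the "cell" of a for the weight vector x = G(p):
  the points s of S where a minimizes s_b / x_b. These cells cover S, two of them meet in a
  piece of a hyperplane (a null set), and the cell of a has probability x_a. The latter is
  computed in the chart of H that drops the coordinate a0: slicing at height s_a = h leaves a
  corner simplex, whose volume is known by induction on the dimension; the case a = a0 follows
  by complement. Hence g(U,p) = a exactly when U lies in the cell of a, up to null sets.

  For the inequality we couple p and q through the weight vector with min(p_a, q_a) on a and
  max(p_b, q_b) elsewhere: its cell lies in both cells of a and has probability at least
  min(p_a, q_a)/(1 + T), where T = ||p - q||. Summing over a gives the bound 2T/(1+T) <= 2T.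
  For two letters the cells of one letter are nested, and the disagreement set is the
  difference of two nested cells, of probability T.
\<close>

text \<open>The cell of a letter a for a weight vector w: the points s of the simplex at which a
  minimizes the ratio s_b / w_b (written without division, so zero weights are allowed).\<close>
definition cell :: "'a \<Rightarrow> real^'a::finite \<Rightarrow> (real^'a) set" where
  "cell a w = {s \<in> simplexS. \<forall>b. s$a * w$b \<le> s$b * w$a}"

lemma cell_subset_simplexS: "cell a w \<subseteq> simplexS"
  by (auto simp: cell_def)

lemma closed_simplexS: "closed simplexS"
proof -
  have "simplexS = (\<Inter>b. {s::real^'a::finite. 0 \<le> s$b}) \<inter> {s. (\<Sum>b\<in>UNIV. s$b) = 1}"
    by (auto simp: simplexS_def)
  also have "closed \<dots>"
    by (intro closed_Int closed_INT ballI closed_Collect_le closed_Collect_eq continuous_intros)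
  finally show ?thesis .
qed

lemma simplexS_borel [measurable]: "simplexS \<in> sets borel"
  using closed_simplexS by (rule borel_closed)

lemma closed_cell: "closed (cell a w)"
proof -
  have "cell a w = (\<Inter>b. {s. 0 \<le> s$b}) \<inter> {s. (\<Sum>b\<in>UNIV. s$b) = 1}
                     \<inter> (\<Inter>b. {s. s$a * w$b \<le> s$b * w$a})"
    by (auto simp: cell_def simplexS_def)
  also have "closed \<dots>"
    by (intro closed_Int closed_INT ballI closed_Collect_le closed_Collect_eq continuous_intros)
  finally show ?thesis .
qed

lemma cell_borel [measurable]: "cell a w \<in> sets borel"
  using closed_cell by (rule borel_closed)

lemma axis_in_simplexS: "axis a 1 \<in> simplexS"
  by (auto simp: simplexS_def axis_def sum.delta)

lemma cell_axis: "cell a (axis a 1) = simplexS"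
  by (auto simp: cell_def simplexS_def axis_def)

lemma simplex_has_positive:
  assumes "x \<in> simplexS"
  shows "\<exists>b. 0 < x$b"
proof (rule ccontr)
  assume "\<nexists>b. 0 < x$b"
  then have "x$b \<le> 0" "0 \<le> x$b" for b using assms by (auto simp: simplexS_def not_less)
  then have "\<forall>b. x$b = 0" using order.antisym by blast
  then show False using assms by (simp add: simplexS_def)
qed

text \<open>The cells of a probability vector cover the simplex: any letter minimizing s_b / x_b over
  the support of x will do.\<close>
lemma cell_cover:
  fixes x :: "real^'a::finite"
  assumes x: "x \<in> simplexS" and s: "s \<in> simplexS"
  shows "\<exists>a. s \<in> cell a x"
proof -
  define B where "B = {b. 0 < x$b}"
  have B: "finite B" "B \<noteq> {}" using simplex_has_positive[OF x] by (auto simp: B_def)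
  obtain a where aB: "a \<in> B" and a_min: "\<And>b. b \<in> B \<Longrightarrow> s$a / x$a \<le> s$b / x$b"
    using arg_min_if_finite(1)[OF B, of "\<lambda>b. s$b / x$b"] arg_min_least[OF B, of _ "\<lambda>b. s$b / x$b"]
    by blast
  have "s$a * x$b \<le> s$b * x$a" for b
  proof (cases "b \<in> B")
    case True
    then show ?thesis using a_min[OF True] aB by (simp add: B_def field_simps)
  next
    case False
    then have "x$b \<le> 0" "0 \<le> x$b" using x by (auto simp: B_def simplexS_def)
    then have "x$b = 0" by (rule order.antisym)
    then show ?thesis using s aB by (simp add: B_def simplexS_def)
  qed
  then show ?thesis using s by (auto simp: cell_def)
qed

lemma cell_iff_ratio:
  assumes "\<And>b. 0 \<le> x$b" "0 < x$a"
  shows "s \<in> cell a x \<longleftrightarrow> (\<Sum>b\<in>UNIV. s$b) = 1 \<and> 0 \<le> s$a \<and> (\<forall>b. s$a / x$a * x$b \<le> s$b)"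
proof -
  have "s$a * x$b \<le> s$b * x$a \<longleftrightarrow> s$a / x$a * x$b \<le> s$b" for b
    using assms(2) by (simp add: field_simps)
  moreover have "0 \<le> s$b" if "0 \<le> s$a" "s$a / x$a * x$b \<le> s$b" for b
    using that assms by (meson order_trans divide_nonneg_pos mult_nonneg_nonneg)
  ultimately show ?thesis
    unfolding cell_def simplexS_def by auto
qed

lemma cell_scale:
  assumes "0 < c"
  shows "cell a (c *\<^sub>R w) = cell a w"
  using assms by (auto simp: cell_def)

lemma convex_cell: "convex (cell a x)"
  unfolding convex_def
proof (intro ballI allI impI)
  fix s t :: "real^'a" and u v :: real
  assume s: "s \<in> cell a x" and t: "t \<in> cell a x" and uv: "0 \<le> u" "0 \<le> v" "u + v = 1"
  have "0 \<le> (u *\<^sub>R s + v *\<^sub>R t)$b" for b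
    using s t uv by (auto simp: cell_def simplexS_def)
  moreover have "(\<Sum>b\<in>UNIV. (u *\<^sub>R s + v *\<^sub>R t)$b) = 1"
    using s t uv by (simp add: cell_def simplexS_def sum.distrib flip: sum_distrib_left)
  moreover have "(u *\<^sub>R s + v *\<^sub>R t)$a * x$b \<le> (u *\<^sub>R s + v *\<^sub>R t)$b * x$a" for b
  proof -
    have "s$a * x$b \<le> s$b * x$a" "t$a * x$b \<le> t$b * x$a" using s t by (auto simp: cell_def)
    then have "u * (s$a * x$b) + v * (t$a * x$b) \<le> u * (s$b * x$a) + v * (t$b * x$a)"
      using uv by (intro add_mono mult_left_mono) auto
    then show ?thesis by (simp add: algebra_simps)
  qed
  ultimately show "u *\<^sub>R s + v *\<^sub>R t \<in> cell a x" by (auto simp: cell_def simplexS_def)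
qed

lemma Gp_nth: "Gp p $ a = pmf p a"
  by (simp add: Gp_def)

lemma Gp_in_simplexS: "Gp p \<in> simplexS"
  by (auto simp: simplexS_def Gp_def sum_pmf_eq_1)

text \<open>Every point of the cell of a is a convex combination of the weight vector x and the
  vertices E_b, b different from a: the coefficient of x is s_a / x_a.\<close>
lemma cell_subset_hull:
  fixes x :: "real^'a::finite"
  assumes x: "x \<in> simplexS" and s: "s \<in> cell a x"
  shows "s \<in> convex hull (insert x {axis b 1 | b. b \<noteq> a})"
proof -
  have s_nn: "\<And>b. 0 \<le> s$b" and sum_s: "(\<Sum>b\<in>UNIV. s$b) = 1"
    and x_nn: "\<And>b. 0 \<le> x$b" and sum_x: "(\<Sum>b\<in>UNIV. x$b) = 1"
    and ineq: "\<And>b. s$a * x$b \<le> s$b * x$a"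
    using x s by (auto simp: cell_def simplexS_def)
  define t where "t = s$a / x$a"
  have t_nn: "0 \<le> t" using s_nn x_nn by (simp add: t_def)
  have ta: "t * x$a = s$a"
  proof (cases "x$a = 0")
    case True
    obtain b where b: "0 < x$b" using simplex_has_positive[OF x] by blast
    have "s$a * x$b \<le> 0" using ineq[of b] True by simp
    then have "s$a = 0" using s_nn[of a] b by (simp add: mult_le_0_iff)
    then show ?thesis using True by (simp add: t_def)
  qed (simp add: t_def)
  have rest_nn: "0 \<le> s$b - t * x$b" for b
  proof (cases "x$a = 0")
    case False
    then have "0 < x$a" using x_nn[of a] by simp
    then show ?thesis using ineq[of b] by (simp add: t_def field_simps)
  qed (simp add: t_def s_nn)
  define \<mu> where "\<mu> i = (if i = a then t else s$i - t * x$i)" for i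
  define y where "y i = (if i = a then x else axis i 1)" for i
  have "(\<Sum>i\<in>UNIV. \<mu> i) = t + ((\<Sum>i\<in>UNIV - {a}. s$i) - t * (\<Sum>i\<in>UNIV - {a}. x$i))"
    by (simp add: sum.remove[of UNIV a] \<mu>_def sum_subtractf sum_distrib_left)
  also have "\<dots> = 1"
    using sum_s sum_x ta by (simp add: sum_diff1 algebra_simps)
  finally have \<mu>_sum: "(\<Sum>i\<in>UNIV. \<mu> i) = 1" .
  have s_eq: "s = (\<Sum>i\<in>UNIV. \<mu> i *\<^sub>R y i)"
  proof (subst vec_eq_iff, intro allI)
    fix c
    have "(\<Sum>i\<in>UNIV. \<mu> i *\<^sub>R y i) $ c = t * x$c + (\<Sum>i\<in>UNIV - {a}. \<mu> i * axis i 1 $ c)"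
      by (simp add: sum.remove[of UNIV a] \<mu>_def y_def)
    also have "(\<Sum>i\<in>UNIV - {a}. \<mu> i * axis i 1 $ c) = (if c = a then 0 else \<mu> c)"
      by (simp add: axis_def if_distrib sum.delta cong: if_cong)
    finally show "s $ c = (\<Sum>i\<in>UNIV. \<mu> i *\<^sub>R y i) $ c"
      using ta by (auto simp: \<mu>_def)
  qed
  have "(\<Sum>i\<in>UNIV. \<mu> i *\<^sub>R y i) \<in> convex hull (insert x {axis b 1 | b. b \<noteq> a})"
    by (rule convex_sum)
       (use \<mu>_sum t_nn rest_nn in \<open>auto simp: \<mu>_def y_def intro: hull_inc\<close>)
  then show ?thesis using s_eq by simp
qed

text \<open>The sets S_a(p) of the paper are exactly the cells of G(p). This turns the definition of g,
  stated with convex hulls, into explicit linear inequalities.\<close>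
lemma Sa_eq_cell: "Sa a p = cell a (Gp p)"
proof
  show "Sa a p \<subseteq> cell a (Gp p)"
    unfolding Sa_def
  proof (rule hull_minimal)
    show "insert (Gp p) {axis b 1 | b. b \<noteq> a} \<subseteq> cell a (Gp p)"
      using Gp_in_simplexS[of p] axis_in_simplexS
      by (auto simp: cell_def axis_def Gp_nth)
  qed (rule convex_cell)
  show "cell a (Gp p) \<subseteq> Sa a p"
    unfolding Sa_def using cell_subset_hull[OF Gp_in_simplexS] by blast
qed

lemma nn_integral_power_Icc:
  fixes l s c :: real
  assumes "l \<le> s" "0 \<le> c"
  shows "(\<integral>\<^sup>+y. ennreal (c * (s - y) ^ n / fact n) * indicator {l..s} y \<partial>lborel)
           = ennreal (c * (s - l) ^ Suc n / fact (Suc n))"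
proof -
  have "((\<lambda>y. - (c * (s - y) ^ Suc n / fact (Suc n))) has_real_derivative c * (s - y) ^ n / fact n) (at y)"
    for y
    by (rule derivative_eq_intros refl | simp add: fact_Suc del: of_nat_Suc)+
  then have "(\<integral>\<^sup>+y. ennreal (c * (s - y) ^ n / fact n) * indicator {l..s} y \<partial>lborel)
               = ennreal (- (c * (s - s) ^ Suc n / fact (Suc n)) - - (c * (s - l) ^ Suc n / fact (Suc n)))"
    using assms by (intro nn_integral_FTC_Icc) auto
  then show ?thesis by simp
qed

definition corner :: "'i set \<Rightarrow> ('i \<Rightarrow> real) \<Rightarrow> real \<Rightarrow> ('i \<Rightarrow> real) set" where
  "corner I c t = {x. (\<forall>i\<in>I. c i \<le> x i) \<and> sum x I \<le> t}"

lemma corner_sets [measurable]: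
  assumes "finite I"
  shows "corner I c t \<inter> space (Pi\<^sub>M I (\<lambda>_. lborel)) \<in> sets (Pi\<^sub>M I (\<lambda>_. lborel))"
proof -
  have "corner I c t \<inter> space (Pi\<^sub>M I (\<lambda>_. lborel)) =
          {x\<in>space (Pi\<^sub>M I (\<lambda>_. lborel)). (\<forall>i\<in>I. c i \<le> x i) \<and> sum x I \<le> t}"
    by (auto simp: corner_def)
  also have "\<dots> \<in> sets (Pi\<^sub>M I (\<lambda>_. lborel))"
    using assms by measurable
  finally show ?thesis .
qed

lemma corner_insert:
  assumes "i \<notin> I" "finite I"
  shows "x(i := y) \<in> corner (insert i I) c t \<longleftrightarrow> c i \<le> y \<and> x \<in> corner I c (t - y)"
  using assms unfolding corner_def by (auto simp: sum_delta_notmem algebra_simps)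

lemma emeasure_corner:
  assumes "finite I"
  shows "emeasure (Pi\<^sub>M I (\<lambda>_. lborel)) (corner I c t \<inter> space (Pi\<^sub>M I (\<lambda>_. lborel)))
          = (if sum c I \<le> t then ennreal ((t - sum c I) ^ card I / fact (card I)) else 0)"
  using assms
proof (induction arbitrary: t rule: finite_induct)
  case empty
  then show ?case by (simp add: PiM_empty corner_def)
next
  case (insert i I t)
  let ?M = "\<lambda>I. Pi\<^sub>M I (\<lambda>_. lborel :: real measure)"
  interpret product_sigma_finite "\<lambda>_. lborel :: real measure" by standard
  define s where "s = t - sum c I"
  have "emeasure (?M (insert i I)) (corner (insert i I) c t \<inter> space (?M (insert i I)))
      = (\<integral>\<^sup>+ y. \<integral>\<^sup>+ x. indicator (corner (insert i I) c t \<inter> space (?M (insert i I))) (x(i := y))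
             \<partial>?M I \<partial>lborel)"
    using insert.hyps by (subst nn_integral_indicator[symmetric], simp,
                          intro product_nn_integral_insert_rev) auto
  also have "\<dots> = (\<integral>\<^sup>+ y. \<integral>\<^sup>+ x. indicator {c i..} y * indicator (corner I c (t - y) \<inter> space (?M I)) x
                      \<partial>?M I \<partial>lborel)"
    using insert.hyps corner_insert[of i I]
    by (intro nn_integral_cong)
       (auto simp: fun_eq_iff indicator_def space_PiM PiE_def extensional_def)
  also have "\<dots> = (\<integral>\<^sup>+ y. indicator {c i..} y * emeasure (?M I) (corner I c (t - y) \<inter> space (?M I))
                      \<partial>lborel)"
    using insert.hyps by (simp add: nn_integral_cmult)
  also have "\<dots> = (\<integral>\<^sup>+ y. ennreal (1 * (s - y) ^ card I / fact (card I)) * indicator {c i..s} y \<partial>lborel)"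
    using insert.IH by (intro nn_integral_cong) (auto simp: indicator_def s_def algebra_simps)
  also have "\<dots> = (if c i \<le> s then ennreal ((s - c i) ^ Suc (card I) / fact (Suc (card I))) else 0)"
    using nn_integral_power_Icc[of "c i" s 1 "card I"] by (cases "c i \<le> s") auto
  finally show ?case
    using insert.hyps by (simp add: s_def algebra_simps)
qed

abbreviation chartM :: "('a::{finite,linorder} \<Rightarrow> real) measure" where
  "chartM \<equiv> PiM (UNIV - {a0}) (\<lambda>_. lborel)"

lemma chartH_nth: "chartH y $ b = (if b = a0 then 1 - (\<Sum>c\<in>UNIV - {a0}. y c) else y b)"
  by (simp add: chartH_def)

lemma sum_chartH: "(\<Sum>b\<in>UNIV. chartH y $ b) = 1"
proof -
  have "(\<Sum>b\<in>UNIV. chartH y $ b) = chartH y $ a0 + (\<Sum>b\<in>UNIV - {a0}. chartH y $ b)"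
    by (simp add: sum.remove)
  also have "(\<Sum>b\<in>UNIV - {a0}. chartH y $ b) = (\<Sum>b\<in>UNIV - {a0}. y b)"
    by (intro sum.cong) (auto simp: chartH_nth)
  finally show ?thesis by (simp add: chartH_nth)
qed

lemma chartH_measurable [measurable]: "chartH \<in> measurable chartM (borel :: (real^'a::{finite,linorder}) measure)"
proof -
  have "(\<lambda>x. chartH x $ i) \<in> borel_measurable chartM" for i :: 'a
    by (cases "i = a0") (simp_all add: chartH_nth)
  then show ?thesis
    by (subst borel_measurable_euclidean_space)
       (auto simp: Basis_vec_def cart_eq_inner_axis[symmetric] inner_commute)
qed

lemma sets_lebesgueH [simp]: "sets lebesgueH = sets borel"
  by (simp add: lebesgueH_def)

lemma emeasure_lebesgueH:
  assumes "X \<in> sets borel"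
  shows "emeasure lebesgueH X = emeasure chartM (chartH -` X \<inter> space chartM)"
  unfolding lebesgueH_def using assms by (simp add: emeasure_distr)

lemma chart_cell_slice:
  fixes x :: "real^'a::{finite,linorder}"
  assumes x: "\<And>b. 0 \<le> x$b" "0 < x$a" "(\<Sum>b\<in>UNIV. x$b) = 1"
    and aa0: "a \<noteq> a0" and J: "J = UNIV - {a0, a}"
  shows "chartH (u(a := h)) \<in> cell a x \<longleftrightarrow>
           0 \<le> h \<and> u \<in> corner J (\<lambda>b. h / x$a * x$b) (1 - h - h / x$a * x$a0)"
proof -
  let ?s = "chartH (u(a := h))"
  have aJ: "a \<notin> J" and UJ: "UNIV - {a0} = insert a J" using aa0 by (auto simp: J)
  have s_a: "?s $ a = h" using aa0 by (simp add: chartH_nth)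
  have s_J: "?s $ b = u b" if "b \<in> J" for b using that by (auto simp: chartH_nth J)
  have "(\<Sum>b\<in>UNIV - {a0}. (u(a := h)) b) = h + sum u J"
    unfolding UJ using aJ by (simp add: sum.If_cases Int_absorb2 subset_Compl_singleton)
  then have s_a0: "?s $ a0 = 1 - h - sum u J" by (simp add: chartH_nth)
  have all_split: "(\<forall>b. P b) \<longleftrightarrow> P a0 \<and> P a \<and> (\<forall>b\<in>J. P b)" for P by (auto simp: J)
  show ?thesis
    unfolding cell_iff_ratio[OF x(1,2)] all_split[of "\<lambda>b. _ b \<le> ?s $ b"]
    using x(2) by (auto simp: corner_def sum_chartH s_a s_J s_a0 algebra_simps)
qed

lemma corner_slice_volume:
  fixes x :: "real^'a::{finite,linorder}"
  assumes aa0: "a \<noteq> a0" and x: "x \<in> simplexS" and xa: "0 < x$a" and J: "J = UNIV - {a0, a}"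
  shows "indicator {0..} h * emeasure (Pi\<^sub>M J (\<lambda>_. lborel))
             (corner J (\<lambda>b. h / x$a * x$b) (1 - h - h / x$a * x$a0) \<inter> space (Pi\<^sub>M J (\<lambda>_. lborel)))
         = ennreal (1 / x$a ^ card J * (x$a - h) ^ card J / fact (card J)) * indicator {0..x$a} h"
proof -
  have aJ: "a \<notin> J" and fJ: "finite J" and UJ: "UNIV - {a0} = insert a J"
    using aa0 by (auto simp: J)
  have "(\<Sum>b\<in>UNIV. x$b) = x$a0 + (\<Sum>b\<in>UNIV - {a0}. x$b)"
    by (simp add: sum.remove)
  also have "\<dots> = x$a0 + x$a + sum (($) x) J"
    unfolding UJ using aJ fJ by simp
  finally have sum_J: "sum (($) x) J = 1 - x$a0 - x$a" using x by (simp add: simplexS_def)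
  define c where "c = (\<lambda>b. h / x$a * x$b)"
  define t where "t = 1 - h - h / x$a * x$a0"
  have "sum c J = h / x$a * (1 - x$a0 - x$a)"
    unfolding c_def sum_J[symmetric] by (simp only: flip: sum_distrib_left)
  then have gap: "t - sum c J = (x$a - h) / x$a"
    using xa by (simp add: t_def field_simps)
  have "sum c J \<le> t \<longleftrightarrow> 0 \<le> (x$a - h) / x$a"
    using gap by linarith
  also have "\<dots> \<longleftrightarrow> h \<le> x$a" using xa by (simp add: zero_le_divide_iff)
  finally show ?thesis
    unfolding c_def[symmetric] t_def[symmetric]
    using fJ by (simp add: emeasure_corner gap power_divide indicator_def)
qed

lemma emeasure_cell_chart:
  fixes x :: "real^'a::{finite,linorder}"
  assumes aa0: "a \<noteq> a0" and x: "x \<in> simplexS" and xa: "0 < x$a"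
  shows "emeasure lebesgueH (cell a x) = ennreal (x$a / fact (card (UNIV - {a0::'a})))"
proof -
  define J where "J = UNIV - {a0, a}"
  define k where "k = card J"
  have aJ: "a \<notin> J" and fJ: "finite J" and UJ: "UNIV - {a0} = insert a J"
    using aa0 by (auto simp: J_def)
  have x_nn: "\<And>b. 0 \<le> x$b" and sum_x: "(\<Sum>b\<in>UNIV. x$b) = 1"
    using x by (auto simp: simplexS_def)
  let ?M = "\<lambda>I. Pi\<^sub>M I (\<lambda>_. lborel :: real measure)"
  let ?corner = "\<lambda>h. corner J (\<lambda>b. h / x$a * x$b) (1 - h - h / x$a * x$a0)"
  interpret product_sigma_finite "\<lambda>_. lborel :: real measure" by standard
  define X where "X = chartH -` cell a x \<inter> space (?M (insert a J))"
  have X_sets: "X \<in> sets (?M (insert a J))"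
    unfolding X_def UJ[symmetric] by measurable
  have "emeasure (?M (insert a J)) X = (\<integral>\<^sup>+ h. \<integral>\<^sup>+ u. indicator X (u(a := h)) \<partial>?M J \<partial>lborel)"
    using X_sets fJ aJ by (subst nn_integral_indicator[symmetric], simp,
                           intro product_nn_integral_insert_rev) auto
  also have "\<dots> = (\<integral>\<^sup>+ h. \<integral>\<^sup>+ u. indicator {0..} h * indicator (?corner h \<inter> space (?M J)) u
                      \<partial>?M J \<partial>lborel)"
    using chart_cell_slice[OF x_nn xa sum_x aa0 J_def]
    by (intro nn_integral_cong) (auto simp: X_def indicator_def space_PiM PiE_def extensional_def)
  also have "\<dots> = (\<integral>\<^sup>+ h. indicator {0..} h * emeasure (?M J) (?corner h \<inter> space (?M J)) \<partial>lborel)"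
    using fJ by (simp add: nn_integral_cmult)
  also have "\<dots> = (\<integral>\<^sup>+ h. ennreal (1 / x$a ^ k * (x$a - h) ^ k / fact k) * indicator {0..x$a} h \<partial>lborel)"
    using corner_slice_volume[OF aa0 x xa J_def] by (simp add: k_def)
  also have "\<dots> = ennreal (1 / x$a ^ k * (x$a - 0) ^ Suc k / fact (Suc k))"
    using xa by (intro nn_integral_power_Icc) auto
  also have "\<dots> = ennreal (x$a / fact (Suc k))"
    using xa by simp
  finally show ?thesis
    using aJ fJ by (simp add: emeasure_lebesgueH X_def UJ k_def)
qed

lemma null_PiM_hyperplane:
  fixes \<alpha> :: "'i \<Rightarrow> real"
  assumes fI: "finite I" and cI: "c \<in> I" and ac: "\<alpha> c \<noteq> 0"
  shows "{y \<in> space (PiM I (\<lambda>_. lborel :: real measure)). (\<Sum>b\<in>I. \<alpha> b * y b) = e}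
           \<in> null_sets (PiM I (\<lambda>_. lborel :: real measure))"
proof -
  define J where "J = I - {c}"
  have IJ: "I = insert c J" and cJ: "c \<notin> J" and fJ: "finite J" using cI fI by (auto simp: J_def)
  let ?M = "\<lambda>A. Pi\<^sub>M A (\<lambda>_. lborel :: real measure)"
  define X where "X = {y \<in> space (?M (insert c J)). (\<Sum>b\<in>insert c J. \<alpha> b * y b) = e}"
  have X_sets: "X \<in> sets (?M (insert c J))" unfolding X_def using fJ by measurable
  have line: "indicator X (x(c := y)) = (indicator {(e - (\<Sum>b\<in>J. \<alpha> b * x b)) / \<alpha> c} y :: ennreal)"
    if x: "x \<in> space (?M J)" for x y
  proof -
    have "x(c := y) \<in> space (?M (insert c J))"
      using x by (auto simp: space_PiM PiE_def extensional_def)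
    moreover have "(\<Sum>b\<in>insert c J. \<alpha> b * (x(c:=y)) b) = \<alpha> c * y + (\<Sum>b\<in>J. \<alpha> b * x b)"
      using cJ fJ by (auto intro: sum.cong)
    ultimately show ?thesis
      using ac by (auto simp: X_def indicator_def field_simps)
  qed
  interpret product_sigma_finite "\<lambda>_. lborel :: real measure" by standard
  have "emeasure (?M (insert c J)) X = (\<integral>\<^sup>+ x. \<integral>\<^sup>+ y. indicator X (x(c := y)) \<partial>lborel \<partial>?M J)"
    using X_sets fJ cJ by (subst nn_integral_indicator[symmetric], simp,
                           intro product_nn_integral_insert) auto
  also have "\<dots> = (\<integral>\<^sup>+ x. 0 \<partial>?M J)"
    using line by (intro nn_integral_cong) simp
  also have "\<dots> = 0" by simp
  finally show ?thesis
    using X_sets unfolding X_def IJ[symmetric] by auto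
qed

text \<open>A linear equation with non-constant coefficients cuts H in a null set (constant coefficients
  would describe all of H, since coordinates sum to 1 there).\<close>
lemma null_lebesgueH_hyperplane:
  fixes \<beta> :: "real^'a::{finite,linorder}"
  assumes "\<beta>$b \<noteq> \<beta>$c"
  shows "{s. (\<Sum>d\<in>UNIV. \<beta>$d * s$d) = e} \<in> null_sets lebesgueH"
proof -
  obtain d where d: "\<beta>$d \<noteq> \<beta>$a0" using assms by metis
  have on_chart: "(\<Sum>c\<in>UNIV. \<beta>$c * chartH y $ c) = \<beta>$a0 + (\<Sum>b\<in>UNIV - {a0}. (\<beta>$b - \<beta>$a0) * y b)"
    for y
  proof -
    have "(\<Sum>c\<in>UNIV. \<beta>$c * chartH y $ c)
            = \<beta>$a0 * chartH y $ a0 + (\<Sum>c\<in>UNIV - {a0}. \<beta>$c * chartH y $ c)"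
      by (simp add: sum.remove)
    also have "(\<Sum>c\<in>UNIV - {a0}. \<beta>$c * chartH y $ c) = (\<Sum>c\<in>UNIV - {a0}. \<beta>$c * y c)"
      by (intro sum.cong) (auto simp: chartH_nth)
    finally show ?thesis
      by (simp add: chartH_nth algebra_simps sum_subtractf sum_distrib_left)
  qed
  have closed: "closed {s::real^'a::{finite,linorder}. (\<Sum>d\<in>UNIV. \<beta>$d * s$d) = e}"
    by (intro closed_Collect_eq continuous_intros)
  have "chartH -` {s. (\<Sum>d\<in>UNIV. \<beta>$d * s$d) = e} \<inter> space chartM =
        {y \<in> space chartM. (\<Sum>b\<in>UNIV - {a0}. (\<beta>$b - \<beta>$a0) * y b) = e - \<beta>$a0}"
    by (auto simp: on_chart)
  moreover have "\<dots> \<in> null_sets chartM"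
    using d by (intro null_PiM_hyperplane[of _ d]) auto
  ultimately show ?thesis
    using closed by (simp add: null_sets_def emeasure_lebesgueH borel_closed)
qed

text \<open>Probability facts about U require at least two letters (otherwise H is a point).\<close>
lemma exists_non_a0:
  assumes "1 < CARD('a::{finite,linorder})"
  shows "\<exists>a1::'a. a1 \<noteq> a0"
proof (rule ccontr)
  assume "\<nexists>a1::'a. a1 \<noteq> a0"
  then have "(UNIV :: 'a set) = {a0}" by auto
  then have "CARD('a) = card {a0::'a}" by (simp only:)
  then show False using assms by simp
qed

text \<open>The simplex is the cell of a1 for the vertex E_a1, so its volume is 1/n!.\<close>
lemma emeasure_lebesgueH_simplexS:
  assumes "1 < CARD('a::{finite,linorder})"
  shows "emeasure lebesgueH (simplexS :: (real^'a::{finite,linorder}) set)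
           = ennreal (1 / fact (card (UNIV - {a0::'a::{finite,linorder}})))"
proof -
  obtain a1 :: 'a where "a1 \<noteq> a0" using exists_non_a0[OF assms] by blast
  then show ?thesis
    using emeasure_cell_chart[of a1 "axis a1 1"] axis_in_simplexS[of a1] by (simp add: cell_axis)
qed

lemma sets_uniformS [simp]: "sets uniformS = sets borel"
  by (simp add: uniformS_def)

lemma prob_space_uniformS:
  assumes "1 < CARD('a::{finite,linorder})"
  shows "prob_space (uniformS :: (real^'a::{finite,linorder}) measure)"
  unfolding uniformS_def
  by (rule prob_space_uniform_measure) (simp_all add: emeasure_lebesgueH_simplexS[OF assms])

lemma measure_uniformS:
  assumes "1 < CARD('a::{finite,linorder})" and "X \<in> sets borel"
  shows "measure (uniformS :: (real^'a::{finite,linorder}) measure) X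
           = fact (card (UNIV - {a0::'a::{finite,linorder}})) * measure lebesgueH (simplexS \<inter> X)"
proof -
  have "measure lebesgueH (simplexS :: (real^'a::{finite,linorder}) set) = 1 / fact (card (UNIV - {a0::'a}))"
    by (simp add: measure_def emeasure_lebesgueH_simplexS[OF assms(1)])
  then show ?thesis
    using assms unfolding uniformS_def
    by (subst measure_uniform_measure) (simp_all add: emeasure_lebesgueH_simplexS)
qed

lemma null_uniformS_outside: "- simplexS \<in> null_sets uniformS"
proof -
  let ?S = "simplexS :: (real^'a::{finite,linorder}) set"
  have "emeasure (uniform_measure lebesgueH ?S) (- ?S) = emeasure lebesgueH (?S \<inter> - ?S) / emeasure lebesgueH ?S"
    by (rule emeasure_uniform_measure) (simp_all add: borel_comp)
  then show ?thesis
    by (simp add: uniformS_def null_sets_def borel_comp)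
qed

lemma null_uniformS_of_lebesgueH:
  assumes "Z \<in> null_sets lebesgueH"
  shows "Z \<in> null_sets uniformS"
proof -
  have Z: "Z \<in> sets borel" using assms by auto
  have "simplexS \<inter> Z \<in> null_sets lebesgueH"
    using assms by (rule null_set_Int1) simp
  then show ?thesis
    using Z by (simp add: null_sets_def uniformS_def)
qed

lemma null_uniformS_two_coords:
  fixes a b :: "'a::{finite,linorder}"
  assumes "a \<noteq> b" "u \<noteq> v"
  shows "{s :: real^'a::{finite,linorder}. u * s$a + v * s$b = e} \<in> null_sets uniformS"
proof -
  define \<beta> :: "real^'a::{finite,linorder}" where "\<beta> = (\<chi> c. if c = a then u else if c = b then v else 0)"
  have "(\<Sum>c\<in>UNIV. \<beta>$c * s$c) = u * s$a + v * s$b" for s :: "real^'a::{finite,linorder}"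
  proof -
    have "(\<Sum>c\<in>UNIV. \<beta>$c * s$c)
            = (\<Sum>c\<in>UNIV. (if c = a then u * s$c else 0) + (if c = b then v * s$c else 0))"
      using assms(1) by (intro sum.cong) (auto simp: \<beta>_def)
    then show ?thesis by (simp add: sum.distrib)
  qed
  moreover have "\<beta>$a \<noteq> \<beta>$b" using assms by (simp add: \<beta>_def)
  ultimately show ?thesis
    using null_lebesgueH_hyperplane[of \<beta> a b e] by (simp add: null_uniformS_of_lebesgueH)
qed

text \<open>The cell of a letter of weight zero lies in the face s_a = 0, a null set.\<close>
lemma cell_null_if_zero:
  fixes x :: "real^'a::{finite,linorder}"
  assumes x: "x \<in> simplexS" and xa: "x$a = 0"
  shows "cell a x \<in> null_sets uniformS"
proof -
  obtain b where b: "0 < x$b" using simplex_has_positive[OF x] by blast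
  then have ab: "a \<noteq> b" using xa by auto
  have sub: "cell a x \<subseteq> {s. 1 * s$a + 0 * s$b = 0}"
  proof
    fix s assume s: "s \<in> cell a x"
    then have "s$a * x$b \<le> 0" "0 \<le> s$a" using xa by (auto simp: cell_def simplexS_def)
    then show "s \<in> {s. 1 * s$a + 0 * s$b = 0}" using b by (simp add: mult_le_0_iff)
  qed
  show ?thesis
    using null_uniformS_two_coords[OF ab one_neq_zero, of 0] by (rule null_sets_subset) (simp add: cell_borel, rule sub)
qed

text \<open>Two distinct cells of a probability vector meet in a null set (a piece of a hyperplane).\<close>
lemma cell_overlap_null:
  fixes x :: "real^'a::{finite,linorder}"
  assumes x: "x \<in> simplexS" and ab: "a \<noteq> b"
  shows "cell a x \<inter> cell b x \<in> null_sets uniformS"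
proof (cases "x$a = 0 \<or> x$b = 0")
  case True
  then show ?thesis
  proof
    assume "x$a = 0"
    then show ?thesis by (rule null_sets_subset[OF cell_null_if_zero[OF x]]) auto
  next
    assume "x$b = 0"
    then show ?thesis by (rule null_sets_subset[OF cell_null_if_zero[OF x]]) auto
  qed
next
  case False
  then have "0 < x$a" "0 < x$b" using x by (auto simp: simplexS_def order_le_less)
  then have "x$b \<noteq> - x$a" by linarith
  then have null: "{s. x$b * s$a + (- x$a) * s$b = 0} \<in> null_sets uniformS"
    by (rule null_uniformS_two_coords[OF ab])
  have sub: "cell a x \<inter> cell b x \<subseteq> {s. x$b * s$a + (- x$a) * s$b = 0}"
  proof
    fix s assume "s \<in> cell a x \<inter> cell b x"
    then have "s$a * x$b \<le> s$b * x$a" "s$b * x$a \<le> s$a * x$b" by (auto simp: cell_def)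
    then show "s \<in> {s. x$b * s$a + (- x$a) * s$b = 0}" by (simp add: algebra_simps)
  qed
  show ?thesis
    using null by (rule null_sets_subset) (simp add: cell_borel, rule sub)
qed

lemma measure_cell_chart:
  fixes x :: "real^'a::{finite,linorder}"
  assumes aa0: "a \<noteq> a0" and x: "x \<in> simplexS"
  shows "measure uniformS (cell a x) = x$a"
proof (cases "x$a = 0")
  case True
  then show ?thesis using cell_null_if_zero[OF x True] by (simp add: measure_eq_0_null_sets)
next
  case False
  moreover have "0 \<le> x$a" using x by (simp add: simplexS_def)
  ultimately have xa: "0 < x$a" by simp
  have card: "1 < CARD('a)"
    using card_mono[of UNIV "{a, a0}"] aa0 by simp
  have "measure lebesgueH (cell a x) = x$a / fact (card (UNIV - {a0::'a}))"
    using emeasure_cell_chart[OF aa0 x xa] xa by (simp add: measure_def)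
  then show ?thesis
    using cell_subset_simplexS[of a x] by (simp add: measure_uniformS[OF card] Int_absorb1)
qed

text \<open>Since the cells cover the simplex and overlap only in null sets, their probabilities add
  up to 1.\<close>
lemma sum_measure_cells:
  fixes x :: "real^'a::{finite,linorder}"
  assumes card: "1 < CARD('a)" and x: "x \<in> simplexS"
  shows "(\<Sum>b\<in>UNIV. measure uniformS (cell b x)) = 1"
proof -
  interpret prob_space "uniformS :: (real^'a::{finite,linorder}) measure"
    by (rule prob_space_uniformS[OF card])
  have "(\<Union>b. cell b x) = simplexS"
  proof
    show "(\<Union>b. cell b x) \<subseteq> simplexS" using cell_subset_simplexS by blast
    show "simplexS \<subseteq> (\<Union>b. cell b x)" using cell_cover[OF x] by blast
  qed
  moreover have "measure uniformS (\<Union>b\<in>UNIV. cell b x) = (\<Sum>b\<in>UNIV. measure uniformS (cell b x))"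
  proof (rule measure_UNION_AE)
    show "pairwise (\<lambda>i j. AE s in uniformS. s \<notin> cell i x \<or> s \<notin> cell j x) UNIV"
      unfolding pairwise_def
    proof (intro allI impI ballI)
      fix i j :: 'a assume "i \<noteq> j"
      from cell_overlap_null[OF x this]
      show "AE s in uniformS. s \<notin> cell i x \<or> s \<notin> cell j x"
        by (rule AE_I') auto
    qed
  qed (simp_all add: fmeasurable_eq_sets cell_borel)
  moreover have "emeasure uniformS (simplexS :: (real^'a::{finite,linorder}) set) = 1"
    unfolding uniformS_def
    by (rule emeasure_uniform_measure_1) (simp_all add: emeasure_lebesgueH_simplexS[OF card])
  ultimately show ?thesis by (simp add: measure_def)
qed

text \<open>P[U in cell a x] = x_a for every letter; for a0, where the chart computation does not apply,
  this follows from the other letters by complement.\<close>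
lemma measure_cell:
  fixes x :: "real^'a::{finite,linorder}"
  assumes card: "1 < CARD('a)" and x: "x \<in> simplexS"
  shows "measure uniformS (cell a x) = x$a"
proof (cases "a = a0")
  case True
  have "(\<Sum>b\<in>UNIV. measure uniformS (cell b x))
          = measure uniformS (cell a0 x) + (\<Sum>b\<in>UNIV - {a0}. measure uniformS (cell b x))"
    by (simp add: sum.remove[of UNIV a0])
  also have "(\<Sum>b\<in>UNIV - {a0}. measure uniformS (cell b x)) = (\<Sum>b\<in>UNIV - {a0}. x$b)"
    by (intro sum.cong) (simp_all add: measure_cell_chart[OF _ x])
  finally have "measure uniformS (cell a0 x) + (\<Sum>b\<in>UNIV - {a0}. x$b) = 1"
    using sum_measure_cells[OF card x] by simp
  moreover have "x$a0 + (\<Sum>b\<in>UNIV - {a0}. x$b) = 1"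
    using x by (simp add: simplexS_def sum.remove[of UNIV a0, symmetric])
  ultimately show ?thesis
    using True by simp
qed (rule measure_cell_chart[OF _ x])

lemma measure_cell_weight:
  fixes w :: "real^'a::{finite,linorder}"
  assumes card: "1 < CARD('a)" and w: "\<And>b. 0 \<le> w$b" and W: "0 < (\<Sum>b\<in>UNIV. w$b)"
  shows "measure uniformS (cell a w) = w$a / (\<Sum>b\<in>UNIV. w$b)"
proof -
  define W where "W = (\<Sum>b\<in>UNIV. w$b)"
  have "(1 / W) *\<^sub>R w \<in> simplexS"
    using w W by (auto simp: simplexS_def W_def sum_divide_distrib[symmetric])
  from measure_cell[OF card this, of a] cell_scale[of "1 / W" a w] W
  show ?thesis by (simp add: W_def)
qed

lemma Least_level_iff:
  fixes F :: "'a::{finite,linorder} \<Rightarrow> 'b set"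
  shows "(LEAST a. s \<in> F a) = c \<longleftrightarrow>
           (s \<in> F c \<and> (\<forall>d\<in>{..<c}. s \<notin> F d)) \<or> ((\<forall>d. s \<notin> F d) \<and> (LEAST a::'a. False) = c)"
proof (cases "\<exists>d. s \<in> F d")
  case True
  then have ne: "{a. s \<in> F a} \<noteq> {}" by auto
  have "(LEAST a. s \<in> F a) = Min {a. s \<in> F a}" using True by (intro Least_Min) auto
  moreover have "Min {a. s \<in> F a} = c \<longleftrightarrow> s \<in> F c \<and> (\<forall>d\<in>{..<c}. s \<notin> F d)"
  proof -
    have min_in: "s \<in> F (Min {a. s \<in> F a})" using Min_in[OF _ ne] by auto
    have min_le: "Min {a. s \<in> F a} \<le> d" if "s \<in> F d" for d using that by (intro Min_le) auto
    show ?thesis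
    proof
      assume "s \<in> F c \<and> (\<forall>d\<in>{..<c}. s \<notin> F d)"
      then have "Min {a. s \<in> F a} \<le> c" "\<not> Min {a. s \<in> F a} < c"
        using min_in min_le by auto
      then show "Min {a. s \<in> F a} = c" by simp
    qed (use min_in min_le in \<open>auto simp: not_le[symmetric]\<close>)
  qed
  ultimately show ?thesis using True by auto
next
  case False
  then have nF: "\<And>d. s \<notin> F d" by blast
  then have "(LEAST a. s \<in> F a) = (LEAST a::'a. False)" by simp
  then show ?thesis using nF by simp
qed

lemma gfun_eq_Least: "gfun s p = (LEAST a. s \<in> cell a (Gp p))"
  by (simp add: gfun_def Sa_eq_cell)

lemma gfun_level_borel: "{s. gfun s p = c} \<in> sets borel"
proof -
  have "{s. gfun s p = c} = {s \<in> space borel.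
          (s \<in> cell c (Gp p) \<and> (\<forall>d\<in>{..<c}. s \<notin> cell d (Gp p)))
          \<or> ((\<forall>d. s \<notin> cell d (Gp p)) \<and> (LEAST a::'a. False) = c)}"
    by (simp add: gfun_eq_Least Least_level_iff)
  also have "\<dots> \<in> sets borel"
    by measurable
  finally show ?thesis .
qed

lemma disagreement_borel: "{s. gfun s p \<noteq> gfun s q} \<in> sets borel"
proof -
  have "{s. gfun s p \<noteq> gfun s q} = (\<Union>c. {s. gfun s p = c} - {s. gfun s q = c})" by auto
  also have "\<dots> \<in> sets borel"
    using gfun_level_borel by (intro sets.countable_UN' sets.Diff) auto
  finally show ?thesis .
qed

definition ties :: "real^'a::finite \<Rightarrow> (real^'a) set" where
  "ties x = (\<Union>a. \<Union>b\<in>UNIV - {a}. cell a x \<inter> cell b x)"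

lemma ties_null:
  fixes x :: "real^'a::{finite,linorder}"
  assumes "x \<in> simplexS"
  shows "ties x \<in> null_sets uniformS"
  unfolding ties_def by (intro null_sets_UN' countable_finite cell_overlap_null[OF assms]) auto

lemma gfun_iff_cell:
  assumes s: "s \<in> simplexS" and no_tie: "s \<notin> ties (Gp p)"
  shows "gfun s p = b \<longleftrightarrow> s \<in> cell b (Gp p)"
proof -
  obtain a where a: "s \<in> cell a (Gp p)" using cell_cover[OF Gp_in_simplexS s] by blast
  have unique: "c = a" if "s \<in> cell c (Gp p)" for c
  proof (rule ccontr)
    assume "c \<noteq> a"
    then have "s \<in> ties (Gp p)" using a that unfolding ties_def by blast
    then show False using no_tie by contradiction
  qed
  have "gfun s p = a"
    unfolding gfun_eq_Least by (rule Least_equality) (use a unique in blast)+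
  then show ?thesis using a unique by blast
qed

lemma tvdist_Gp: "tvdist p q = (\<Sum>a\<in>UNIV. \<bar>Gp p $ a - Gp q $ a\<bar>) / 2"
  by (simp add: tvdist_def Gp_nth)

text \<open>The coupling weight for the letter a: min(x_a, y_a) on a, max(x_b, y_b) elsewhere. Its cell
  lies in the cells of a for both x and y.\<close>
definition overlap_weight :: "real^'a::finite \<Rightarrow> real^'a \<Rightarrow> 'a \<Rightarrow> real^'a" where
  "overlap_weight x y a = (\<chi> b. if b = a then min (x$a) (y$a) else max (x$b) (y$b))"

lemma cell_overlap_weight_subset:
  "cell a (overlap_weight x y a) \<subseteq> cell a x \<inter> cell a y"
proof
  fix s assume s: "s \<in> cell a (overlap_weight x y a)"
  let ?w = "overlap_weight x y a"
  have s_nn: "\<And>b. 0 \<le> s$b" and ineq: "\<And>b. s$a * ?w$b \<le> s$b * ?w$a"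
    using s by (auto simp: cell_def simplexS_def)
  have "s$a * z$b \<le> s$b * z$a" if z: "z = x \<or> z = y" for z b
  proof (cases "b = a")
    case False
    have "s$a * z$b \<le> s$a * ?w$b"
      using False z s_nn[of a] by (intro mult_left_mono) (auto simp: overlap_weight_def)
    also have "\<dots> \<le> s$b * ?w$a" by (rule ineq)
    also have "\<dots> \<le> s$b * z$a"
      using z s_nn[of b] by (intro mult_left_mono) (auto simp: overlap_weight_def)
    finally show ?thesis .
  qed simp
  then show "s \<in> cell a x \<inter> cell a y" using s by (auto simp: cell_def)
qed

lemma sum_max_min:
  fixes x y :: "real^'a::finite"
  assumes "x \<in> simplexS" "y \<in> simplexS"
  shows "(\<Sum>b\<in>UNIV. max (x$b) (y$b)) = 1 + (\<Sum>b\<in>UNIV. \<bar>x$b - y$b\<bar>) / 2"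
    and "(\<Sum>b\<in>UNIV. min (x$b) (y$b)) = 1 - (\<Sum>b\<in>UNIV. \<bar>x$b - y$b\<bar>) / 2"
proof -
  have max_half: "max u v = (u + v + \<bar>u - v\<bar>) / 2"
    and min_half: "min u v = (u + v - \<bar>u - v\<bar>) / 2" for u v :: real
    by (simp_all add: max_def min_def abs_if field_simps)
  have "(\<Sum>b\<in>UNIV. max (x$b) (y$b)) = ((\<Sum>b\<in>UNIV. x$b) + (\<Sum>b\<in>UNIV. y$b) + (\<Sum>b\<in>UNIV. \<bar>x$b - y$b\<bar>)) / 2"
    by (simp add: max_half sum.distrib flip: sum_divide_distrib)
  then show "(\<Sum>b\<in>UNIV. max (x$b) (y$b)) = 1 + (\<Sum>b\<in>UNIV. \<bar>x$b - y$b\<bar>) / 2"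
    using assms by (simp add: simplexS_def)
  have "(\<Sum>b\<in>UNIV. min (x$b) (y$b)) = ((\<Sum>b\<in>UNIV. x$b) + (\<Sum>b\<in>UNIV. y$b) - (\<Sum>b\<in>UNIV. \<bar>x$b - y$b\<bar>)) / 2"
    by (simp add: min_half sum.distrib sum_subtractf flip: sum_divide_distrib)
  then show "(\<Sum>b\<in>UNIV. min (x$b) (y$b)) = 1 - (\<Sum>b\<in>UNIV. \<bar>x$b - y$b\<bar>) / 2"
    using assms by (simp add: simplexS_def)
qed

text \<open>The overlap cell of a has probability at least min(x_a, y_a) / (1 + T), where T is the
  total variation distance; the weights sum to between 1 and 1 + T.\<close>
lemma measure_overlap_cell:
  fixes x y :: "real^'a::{finite,linorder}"
  assumes card: "1 < CARD('a)" and x: "x \<in> simplexS" and y: "y \<in> simplexS"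
  defines "T \<equiv> (\<Sum>b\<in>UNIV. \<bar>x$b - y$b\<bar>) / 2"
  shows "min (x$a) (y$a) / (1 + T) \<le> measure uniformS (cell a (overlap_weight x y a))"
proof -
  let ?w = "overlap_weight x y a"
  define W where "W = (\<Sum>b\<in>UNIV. ?w$b)"
  have x_nn: "\<And>b. 0 \<le> x$b" and y_nn: "\<And>b. 0 \<le> y$b" using x y by (auto simp: simplexS_def)
  then have w_nn: "\<And>b. 0 \<le> ?w$b" by (auto simp: overlap_weight_def le_max_iff_disj)
  have "1 \<le> W"
  proof (cases "x$a \<le> y$a")
    case True
    have "(\<Sum>b\<in>UNIV. x$b) \<le> W" unfolding W_def
      by (intro sum_mono) (use True in \<open>auto simp: overlap_weight_def\<close>)
    then show ?thesis using x by (simp add: simplexS_def)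
  next
    case False
    have "(\<Sum>b\<in>UNIV. y$b) \<le> W" unfolding W_def
      by (intro sum_mono) (use False in \<open>auto simp: overlap_weight_def\<close>)
    then show ?thesis using y by (simp add: simplexS_def)
  qed
  moreover have "W \<le> 1 + T"
  proof -
    have "W \<le> (\<Sum>b\<in>UNIV. max (x$b) (y$b))" unfolding W_def
      by (intro sum_mono) (auto simp: overlap_weight_def)
    then show ?thesis using sum_max_min(1)[OF x y] by (simp add: T_def)
  qed
  moreover have "measure uniformS (cell a ?w) = min (x$a) (y$a) / W"
    using measure_cell_weight[OF card w_nn, of a] \<open>1 \<le> W\<close> by (simp add: W_def overlap_weight_def)
  ultimately show ?thesis
    using x_nn[of a] y_nn[of a] by (simp add: frac_le)
qed

lemma disagreement_subset:
  "{s. gfun s p \<noteq> gfun s q} - (ties (Gp p) \<union> ties (Gp q) \<union> - simplexS)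
     \<subseteq> (\<Union>a. cell a (Gp p) - cell a (overlap_weight (Gp p) (Gp q) a))"
proof
  fix s assume s: "s \<in> {s. gfun s p \<noteq> gfun s q} - (ties (Gp p) \<union> ties (Gp q) \<union> - simplexS)"
  define a where "a = gfun s p"
  have "s \<in> cell a (Gp p)" using gfun_iff_cell[of s p a] s by (simp add: a_def)
  moreover have "s \<notin> cell a (Gp q)" using gfun_iff_cell[of s q a] s by (auto simp: a_def)
  ultimately show "s \<in> (\<Union>a. cell a (Gp p) - cell a (overlap_weight (Gp p) (Gp q) a))"
    using cell_overlap_weight_subset by blast
qed

lemma disagreement_bound:
  fixes p q :: "'a::{finite,linorder} pmf"
  assumes card: "1 < CARD('a)"
  shows "measure uniformS {s. gfun s p \<noteq> gfun s q} \<le> 2 * tvdist p q"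
proof -
  interpret prob_space "uniformS :: (real^'a::{finite,linorder}) measure" by (rule prob_space_uniformS[OF card])
  define x where "x = Gp p"
  define y where "y = Gp q"
  define w where "w = overlap_weight x y"
  define T where "T = tvdist p q"
  have x: "x \<in> simplexS" and y: "y \<in> simplexS" by (simp_all add: x_def y_def Gp_in_simplexS)
  have T: "T = (\<Sum>b\<in>UNIV. \<bar>x$b - y$b\<bar>) / 2" by (simp add: T_def x_def y_def tvdist_Gp)
  have T_nn: "0 \<le> T" by (simp add: T sum_nonneg)
  define N where "N = ties x \<union> ties y \<union> - simplexS"
  have N: "N \<in> null_sets uniformS"
    unfolding N_def using ties_null[OF x] ties_null[OF y] null_uniformS_outside by blast
  have "measure uniformS {s. gfun s p \<noteq> gfun s q} \<le> measure uniformS ((\<Union>a. cell a x - cell a (w a)) \<union> N)"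
    using disagreement_subset[of p q] N
    by (intro finite_measure_mono) (auto simp: x_def y_def w_def N_def)
  also have "\<dots> = measure uniformS (\<Union>a. cell a x - cell a (w a))"
    using N by (intro measure_Un_null_set) (auto simp: cell_borel)
  also have "\<dots> \<le> (\<Sum>a\<in>UNIV. measure uniformS (cell a x - cell a (w a)))"
    by (intro finite_measure_subadditive_finite) (auto simp: cell_borel)
  also have "\<dots> = (\<Sum>a\<in>UNIV. x$a - measure uniformS (cell a (w a)))"
  proof (intro sum.cong refl)
    fix a
    have "cell a (w a) \<subseteq> cell a x" using cell_overlap_weight_subset by (auto simp: w_def)
    then show "measure uniformS (cell a x - cell a (w a)) = x$a - measure uniformS (cell a (w a))"
      by (simp add: finite_measure_Diff cell_borel measure_cell[OF card x])
  qed
  also have "\<dots> \<le> (\<Sum>a\<in>UNIV. x$a - min (x$a) (y$a) / (1 + T))"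
    using measure_overlap_cell[OF card x y] by (intro sum_mono) (simp add: w_def T)
  also have "\<dots> = 1 - (1 - T) / (1 + T)"
    using x sum_max_min(2)[OF x y]
    by (simp add: sum_subtractf simplexS_def T flip: sum_divide_distrib)
  also have "\<dots> = 2 * T / (1 + T)"
    using T_nn by (simp add: field_simps)
  also have "\<dots> \<le> 2 * T"
    using T_nn by (simp add: divide_le_eq field_simps)
  finally show ?thesis by (simp add: T_def)
qed

lemma cell_mono_two_point:
  fixes x y :: "real^'a::finite"
  assumes U: "(UNIV :: 'a set) = {a, b}" and ab: "a \<noteq> b"
    and x: "x \<in> simplexS" and y: "y \<in> simplexS" and xy: "x$a \<le> y$a"
  shows "cell a x \<subseteq> cell a y"
proof
  fix s assume s: "s \<in> cell a x"
  have s_nn: "\<And>c. 0 \<le> s$c" and ineq: "s$a * x$b \<le> s$b * x$a"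
    using s by (auto simp: cell_def simplexS_def)
  have "x$a + x$b = 1" "y$a + y$b = 1"
    using x y ab by (simp_all add: simplexS_def U)
  then have "s$a * y$b \<le> s$a * x$b"
    using xy s_nn[of a] by (intro mult_left_mono) auto
  also have "\<dots> \<le> s$b * x$a" by (rule ineq)
  also have "\<dots> \<le> s$b * y$a" using xy s_nn[of b] by (rule mult_left_mono)
  finally have "s$a * y$c \<le> s$c * y$a" for c
    using U by (cases "c = a") auto
  then show "s \<in> cell a y" using s by (simp add: cell_def)
qed

lemma disagreement_two_point_off_ties:
  fixes p q :: "'a::{finite,linorder} pmf"
  assumes U: "(UNIV :: 'a set) = {a, b}" and ab: "a \<noteq> b" and pq: "pmf p a \<le> pmf q a"
    and s: "s \<in> simplexS" "s \<notin> ties (Gp p)" "s \<notin> ties (Gp q)"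
  shows "gfun s p \<noteq> gfun s q \<longleftrightarrow> s \<in> cell a (Gp q) - cell a (Gp p)"
proof -
  have nested: "cell a (Gp p) \<subseteq> cell a (Gp q)"
    using pq by (intro cell_mono_two_point[OF U ab Gp_in_simplexS Gp_in_simplexS]) (simp add: Gp_nth)
  have two: "c = a \<or> c = b" for c using U by blast
  have "gfun s p \<noteq> gfun s q \<longleftrightarrow> (gfun s p = a) \<noteq> (gfun s q = a)"
    using two[of "gfun s p"] two[of "gfun s q"] ab by auto
  also have "\<dots> \<longleftrightarrow> s \<in> cell a (Gp q) - cell a (Gp p)"
    using gfun_iff_cell[OF s(1,2)] gfun_iff_cell[OF s(1,3)] nested by auto
  finally show ?thesis .
qed

lemma disagreement_two_point_ordered:
  fixes p q :: "'a::{finite,linorder} pmf"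
  assumes U: "(UNIV :: 'a set) = {a, b}" and ab: "a \<noteq> b" and pq: "pmf p a \<le> pmf q a"
  shows "measure uniformS {s. gfun s p \<noteq> gfun s q} = tvdist p q"
proof -
  have card: "1 < CARD('a)" unfolding U using ab by simp
  interpret prob_space "uniformS :: (real^'a::{finite,linorder}) measure"
    by (rule prob_space_uniformS[OF card])
  define x where "x = Gp p"
  define y where "y = Gp q"
  have x: "x \<in> simplexS" and y: "y \<in> simplexS" by (simp_all add: x_def y_def Gp_in_simplexS)
  have sum_x: "x$a + x$b = 1" and sum_y: "y$a + y$b = 1"
    using x y ab by (simp_all add: simplexS_def U)
  have xy: "x$a \<le> y$a" using pq by (simp add: x_def y_def Gp_nth)
  define N where "N = ties x \<union> ties y \<union> - simplexS"
  have N: "N \<in> null_sets uniformS"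
    unfolding N_def using ties_null[OF x] ties_null[OF y] null_uniformS_outside by blast
  have "AE s in uniformS. s \<in> {s. gfun s p \<noteq> gfun s q} \<longleftrightarrow> s \<in> cell a y - cell a x"
    using disagreement_two_point_off_ties[OF U ab pq]
    by (intro AE_I'[OF N]) (auto simp: N_def x_def y_def)
  then have "measure uniformS {s. gfun s p \<noteq> gfun s q} = measure uniformS (cell a y - cell a x)"
    using disagreement_borel by (intro measure_eq_AE) (auto simp: cell_borel)
  also have "\<dots> = y$a - x$a"
    using cell_mono_two_point[OF U ab x y xy]
    by (simp add: finite_measure_Diff cell_borel measure_cell[OF card x] measure_cell[OF card y])
  also have "\<dots> = tvdist p q"
    using sum_x sum_y xy ab by (simp add: tvdist_Gp U x_def y_def)
  finally show ?thesis .
qed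

lemma disagreement_two_point:
  fixes p q :: "'a::{finite,linorder} pmf"
  assumes "CARD('a) = 2"
  shows "measure uniformS {s. gfun s p \<noteq> gfun s q} = tvdist p q"
proof -
  obtain a b :: 'a where U: "UNIV = {a, b}" and ab: "a \<noteq> b"
    using assms by (auto simp: card_2_iff)
  show ?thesis
  proof (cases "pmf p a \<le> pmf q a")
    case True
    then show ?thesis by (rule disagreement_two_point_ordered[OF U ab])
  next
    case False
    then have "measure uniformS {s. gfun s q \<noteq> gfun s p} = tvdist q p"
      by (intro disagreement_two_point_ordered[OF U ab]) simp
    then show ?thesis by (simp add: tvdist_def abs_minus_commute eq_commute)
  qed
qed

lemma pmf_eq_if_card_1:
  fixes p q :: "'a::finite pmf"
  assumes "CARD('a) = 1"
  shows "p = q"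
proof -
  obtain c :: 'a where U: "UNIV = {c}" using assms by (auto simp: card_1_singleton_iff)
  have "pmf r c = 1" for r :: "'a pmf"
  proof -
    have "sum (pmf r) UNIV = 1" by (rule sum_pmf_eq_1) auto
    then show ?thesis unfolding U by simp
  qed
  then show ?thesis using U by (intro pmf_eqI) (metis singletonD UNIV_I)
qed

theorem proposition9:
  fixes p q :: "'a::{finite,linorder} pmf"
  shows "{s. gfun s p \<noteq> gfun s q} \<in> sets uniformS
       \<and> measure uniformS {s. gfun s p \<noteq> gfun s q} \<le> 2 * tvdist p q
       \<and> (CARD('a) = 2 \<longrightarrow> measure uniformS {s. gfun s p \<noteq> gfun s q} = tvdist p q)"
proof (cases "CARD('a) = 1")
  case True
  then have "p = q" by (rule pmf_eq_if_card_1)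
  then show ?thesis using True by (simp add: tvdist_def)
next
  case False
  moreover have "0 < CARD('a)" by simp
  ultimately have card: "1 < CARD('a)" by linarith
  show ?thesis
    using disagreement_borel[of p q] disagreement_bound[OF card, of p q]
      disagreement_two_point[where 'a='a, of p q] by simp
qed

end
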